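(* For every command $c$ and stores $\sigma,\sigma'$ of the While-language: $(c,\sigma)\Rightarrow_B\sigma'$ if and only if $(c,\sigma,\Downarrow)\Rightarrow_G\sigma',\Downarrow$.
   Context: While-language syntax: variables $x$ range over a countably infinite set $\mathit{Var}$; $n$ ranges over natural numbers; values are $v ::= \mathsf{null}\mid n$ ($\mathsf{null}$ distinct from every natural number); expressions are $e ::= v\mid x\mid e_1\oplus e_2$ with $\oplus\in\{+,-,*\}$, where $\oplus(n_1,n_2)$ is the result of the operation on naturals; commands are $c ::= \mathsf{skip}\mid\mathsf{alloc}\ x\mid x:=e\mid c_1;c_2\mid \mathsf{if}\ e\ c_1\ c_2\mid\mathsf{while}\ e\ c$. A store $\sigma$ is a finite partial map from $\mathit{Var}$ to values, with domain $\mathrm{dom}(\sigma)$, lookup $\sigma(x)$, update $\sigma[x\mapsto v]$. Expression evaluation $(e,\sigma)\Rightarrow_E v$ is the least relation with: $(v,\sigma)\Rightarrow_E v$; $(x,\sigma)\Rightarrow_E\sigma(x)$ if $x\in\mathrm{dom}(\sigma)$; if $(e_1,\sigma)\Rightarrow_E n_1$ and $(e_2,\sigma)\Rightarrow_E n_2$ with $n_1,n_2$ naturals then $(e_1\oplus e_2,\sigma)\Rightarrow_E\oplus(n_1,n_2)$. Big-step relation $(c,\sigma)\Rightarrow_B\sigma'$ is the least relation with: $(\mathsf{skip},\sigma)\Rightarrow_B\sigma$; $(\mathsf{alloc}\ x,\sigma)\Rightarrow_B\sigma[x\mapsto\mathsf{null}]$ if $x\notin\mathrm{dom}(\sigma)$;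 $(x:=e,\sigma)\Rightarrow_B\sigma[x\mapsto v]$ if $x\in\mathrm{dom}(\sigma)$ and $(e,\sigma)\Rightarrow_E v$; $(c_1;c_2,\sigma)\Rightarrow_B\sigma''$ if $(c_1,\sigma)\Rightarrow_B\sigma'$ and $(c_2,\sigma')\Rightarrow_B\sigma''$; $(\mathsf{if}\ e\ c_1\ c_2,\sigma)\Rightarrow_B\sigma'$ if $(e,\sigma)\Rightarrow_E v$, $v\ne0$, $(c_1,\sigma)\Rightarrow_B\sigma'$; $(\mathsf{if}\ e\ c_1\ c_2,\sigma)\Rightarrow_B\sigma'$ if $(e,\sigma)\Rightarrow_E0$, $(c_2,\sigma)\Rightarrow_B\sigma'$; $(\mathsf{while}\ e\ c,\sigma)\Rightarrow_B\sigma''$ if $(e,\sigma)\Rightarrow_E v$, $v\ne0$, $(c,\sigma)\Rightarrow_B\sigma'$, $(\mathsf{while}\ e\ c,\sigma')\Rightarrow_B\sigma''$; $(\mathsf{while}\ e\ c,\sigma)\Rightarrow_B\sigma$ if $(e,\sigma)\Rightarrow_E0$. Flag-based big-step semantics: status flags $\delta ::= \Downarrow\mid\Uparrow$ (convergent / divergent). Expression evaluation $(e,\sigma,\delta)\Rightarrow_{GE}v,\delta'$ is the least relation with: $(v,\sigma,\Downarrow)\Rightarrow_{GE}v,\Downarrow$; $(x,\sigma,\Downarrow)\Rightarrow_{GE}\sigma(x),\Downarrow$ if $x\in\mathrm{dom}(\sigma)$; if $(e_1,\sigma,\Downarrow)\Rightarrow_{GE}n_1,\delta$ and $(e_2,\sigma,\delta)\Rightarrow_{GE}n_2,\delta'$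 ($n_1,n_2$ naturals) then $(e_1\oplus e_2,\sigma,\Downarrow)\Rightarrow_{GE}\oplus(n_1,n_2),\delta'$; and $(e,\sigma,\Uparrow)\Rightarrow_{GE}v,\Uparrow$ for every value $v$. The command rules for judgments $(c,\sigma,\delta)\Rightarrow_G\sigma',\delta'$ are: $(\mathsf{skip},\sigma,\Downarrow)\Rightarrow_G\sigma,\Downarrow$; $(\mathsf{alloc}\ x,\sigma,\Downarrow)\Rightarrow_G\sigma[x\mapsto\mathsf{null}],\Downarrow$ if $x\notin\mathrm{dom}(\sigma)$; $(x:=e,\sigma,\Downarrow)\Rightarrow_G\sigma[x\mapsto v],\delta$ if $x\in\mathrm{dom}(\sigma)$ and $(e,\sigma,\Downarrow)\Rightarrow_{GE}v,\delta$; $(c_1;c_2,\sigma,\Downarrow)\Rightarrow_G\sigma'',\delta'$ if $(c_1,\sigma,\Downarrow)\Rightarrow_G\sigma',\delta$ and $(c_2,\sigma',\delta)\Rightarrow_G\sigma'',\delta'$; $(\mathsf{if}\ e\ c_1\ c_2,\sigma,\Downarrow)\Rightarrow_G\sigma',\delta'$ if $v\ne0$, $(e,\sigma,\Downarrow)\Rightarrow_{GE}v,\delta$ and $(c_1,\sigma,\delta)\Rightarrow_G\sigma',\delta'$; $(\mathsf{if}\ e\ c_1\ c_2,\sigma,\Downarrow)\Rightarrow_G\sigma',\delta'$ if $(e,\sigma,\Downarrow)\Rightarrow_{GE}0,\delta$ and $(c_2,\sigma,\delta)\Rightarrow_G\sigma',\delta'$; $(\mathsf{while}\ e\ c,\sigma,\Downarrow)\Rightarrow_G\sigma'',\delta''$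 if $(e,\sigma,\Downarrow)\Rightarrow_{GE}v,\delta$, $v\ne0$, $(c,\sigma,\delta)\Rightarrow_G\sigma',\delta'$ and $(\mathsf{while}\ e\ c,\sigma',\delta')\Rightarrow_G\sigma'',\delta''$; $(\mathsf{while}\ e\ c,\sigma,\Downarrow)\Rightarrow_G\sigma,\delta$ if $(e,\sigma,\Downarrow)\Rightarrow_{GE}0,\delta$; $(c,\sigma,\Uparrow)\Rightarrow_G\sigma',\Uparrow$ for every store $\sigma'$. $\Rightarrow_G$ denotes the inductive interpretation (least relation closed under these rules). *)

theory Defs
  imports Main
begin

datatype var = Var nat

datatype val = Null | N nat

datatype binop = Plus | Minus | Times

datatype expr = EVal val | EVar var | EOp binop expr expr

datatype cmd = Skip | Alloc var | Assign var expr | Seq cmd cmd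
  | If expr cmd cmd | While expr cmd

(* Stores: finite partial maps Var -> val (finiteness of domain is required
   explicitly in the theorem) *)
type_synonym store = "var \<rightharpoonup> val"

fun opn :: "binop \<Rightarrow> nat \<Rightarrow> nat \<Rightarrow> nat" where
  "opn Plus a b = a + b"
| "opn Minus a b = a - b"
| "opn Times a b = a * b"

inductive evalE :: "expr \<Rightarrow> store \<Rightarrow> val \<Rightarrow> bool" where
  EV: "evalE (EVal v) \<sigma> v"
| EX: "\<sigma> x = Some v \<Longrightarrow> evalE (EVar x) \<sigma> v"
| EO: "evalE e1 \<sigma> (N n1) \<Longrightarrow> evalE e2 \<sigma> (N n2) \<Longrightarrow>
       evalE (EOp op e1 e2) \<sigma> (N (opn op n1 n2))"

inductive bigB :: "cmd \<Rightarrow> store \<Rightarrow> store \<Rightarrow> bool" where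
  BSkip: "bigB Skip \<sigma> \<sigma>"
| BAlloc: "x \<notin> dom \<sigma> \<Longrightarrow> bigB (Alloc x) \<sigma> (\<sigma>(x \<mapsto> Null))"
| BAssign: "x \<in> dom \<sigma> \<Longrightarrow> evalE e \<sigma> v \<Longrightarrow> bigB (Assign x e) \<sigma> (\<sigma>(x \<mapsto> v))"
| BSeq: "bigB c1 \<sigma> \<sigma>' \<Longrightarrow> bigB c2 \<sigma>' \<sigma>'' \<Longrightarrow> bigB (Seq c1 c2) \<sigma> \<sigma>''"
| BIfT: "evalE e \<sigma> v \<Longrightarrow> v \<noteq> N 0 \<Longrightarrow> bigB c1 \<sigma> \<sigma>' \<Longrightarrow> bigB (If e c1 c2) \<sigma> \<sigma>'"
| BIfF: "evalE e \<sigma> (N 0) \<Longrightarrow> bigB c2 \<sigma> \<sigma>' \<Longrightarrow> bigB (If e c1 c2) \<sigma> \<sigma>'"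
| BWhileT: "evalE e \<sigma> v \<Longrightarrow> v \<noteq> N 0 \<Longrightarrow> bigB c \<sigma> \<sigma>' \<Longrightarrow>
            bigB (While e c) \<sigma>' \<sigma>'' \<Longrightarrow> bigB (While e c) \<sigma> \<sigma>''"
| BWhileF: "evalE e \<sigma> (N 0) \<Longrightarrow> bigB (While e c) \<sigma> \<sigma>"

datatype flag = Conv | Div

inductive evalGE :: "expr \<Rightarrow> store \<Rightarrow> flag \<Rightarrow> val \<Rightarrow> flag \<Rightarrow> bool" where
  GEV: "evalGE (EVal v) \<sigma> Conv v Conv"
| GEX: "\<sigma> x = Some v \<Longrightarrow> evalGE (EVar x) \<sigma> Conv v Conv"
| GEO: "evalGE e1 \<sigma> Conv (N n1) \<delta> \<Longrightarrow> evalGE e2 \<sigma> \<delta> (N n2) \<delta>' \<Longrightarrow>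
        evalGE (EOp op e1 e2) \<sigma> Conv (N (opn op n1 n2)) \<delta>'"
| GEDiv: "evalGE e \<sigma> Div v Div"

inductive bigG :: "cmd \<Rightarrow> store \<Rightarrow> flag \<Rightarrow> store \<Rightarrow> flag \<Rightarrow> bool" where
  GSkip: "bigG Skip \<sigma> Conv \<sigma> Conv"
| GAlloc: "x \<notin> dom \<sigma> \<Longrightarrow> bigG (Alloc x) \<sigma> Conv (\<sigma>(x \<mapsto> Null)) Conv"
| GAssign: "x \<in> dom \<sigma> \<Longrightarrow> evalGE e \<sigma> Conv v \<delta> \<Longrightarrow>
            bigG (Assign x e) \<sigma> Conv (\<sigma>(x \<mapsto> v)) \<delta>"
| GSeq: "bigG c1 \<sigma> Conv \<sigma>' \<delta> \<Longrightarrow> bigG c2 \<sigma>' \<delta> \<sigma>'' \<delta>' \<Longrightarrow>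
         bigG (Seq c1 c2) \<sigma> Conv \<sigma>'' \<delta>'"
| GIfT: "v \<noteq> N 0 \<Longrightarrow> evalGE e \<sigma> Conv v \<delta> \<Longrightarrow> bigG c1 \<sigma> \<delta> \<sigma>' \<delta>' \<Longrightarrow>
         bigG (If e c1 c2) \<sigma> Conv \<sigma>' \<delta>'"
| GIfF: "evalGE e \<sigma> Conv (N 0) \<delta> \<Longrightarrow> bigG c2 \<sigma> \<delta> \<sigma>' \<delta>' \<Longrightarrow>
         bigG (If e c1 c2) \<sigma> Conv \<sigma>' \<delta>'"
| GWhileT: "evalGE e \<sigma> Conv v \<delta> \<Longrightarrow> v \<noteq> N 0 \<Longrightarrow> bigG c \<sigma> \<delta> \<sigma>' \<delta>' \<Longrightarrow>
            bigG (While e c) \<sigma>' \<delta>' \<sigma>'' \<delta>'' \<Longrightarrow> bigG (While e c) \<sigma> Conv \<sigma>'' \<delta>''"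
| GWhileF: "evalGE e \<sigma> Conv (N 0) \<delta> \<Longrightarrow> bigG (While e c) \<sigma> Conv \<sigma> \<delta>"
| GDiv: "bigG c \<sigma> Div \<sigma>' Div"

end

theory Submission
  imports Defs
begin

text \<open>The divergence flag is absorbing: every rule with a divergent input flag yields a
  divergent output flag. Hence in a derivation that ends with a convergent flag every premise
  carries the convergent flag, and the flag-based rules then collapse to the ordinary ones.
  Conversely, an ordinary derivation is a flag-based one with all flags convergent.\<close>

lemma evalGE_converges_imp_evalE:
  "evalGE e \<sigma> \<delta> v Conv \<Longrightarrow> \<delta> = Conv \<and> evalE e \<sigma> v"
  by (induction e \<sigma> \<delta> v "Conv" rule: evalGE.induct) (auto intro: evalE.intros)

lemma evalE_imp_evalGE: "evalE e \<sigma> v \<Longrightarrow> evalGE e \<sigma> Conv v Conv"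
  by (induction rule: evalE.induct) (auto intro: evalGE.intros)

lemma bigG_converges_imp_bigB:
  "bigG c \<sigma> \<delta> \<sigma>' Conv \<Longrightarrow> \<delta> = Conv \<and> bigB c \<sigma> \<sigma>'"
  by (induction c \<sigma> \<delta> \<sigma>' "Conv" rule: bigG.induct)
    (auto dest: evalGE_converges_imp_evalE intro: bigB.intros)

lemma bigB_imp_bigG: "bigB c \<sigma> \<sigma>' \<Longrightarrow> bigG c \<sigma> Conv \<sigma>' Conv"
  by (induction rule: bigB.induct) (blast intro: bigG.intros evalE_imp_evalGE)+

theorem theorem17:
  fixes c :: cmd and \<sigma> \<sigma>' :: store
  assumes "finite (dom \<sigma>)" and "finite (dom \<sigma>')"
  shows "bigB c \<sigma> \<sigma>' \<longleftrightarrow> bigG c \<sigma> Conv \<sigma>' Conv"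
  using bigG_converges_imp_bigB bigB_imp_bigG by blast

end
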